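(* Let $(X,\pi)$ be a finite symmetric two-player game with relative payoff game $(X,\Delta)$. Then $(X,\Delta)$ is a generalized rock-paper-scissors game if and only if there exists an imitation cycle.
   Context: A symmetric two-player game $(X,\pi)$ has common action set $X$ and payoff $\pi:X\times X\to\mathbb{R}$. Relative payoff: $\Delta(x,y)=\pi(x,y)-\pi(y,x)$, so $(X,\Delta)$ is a symmetric zero-sum game. A symmetric zero-sum game $(Y,\Delta)$ is a generalized rock-paper-scissors matrix if for every $y\in Y$ there is $x\in Y$ with $\Delta(x,y)>0$; $(X,\Delta)$ is a generalized rock-paper-scissors game if some nonempty $\bar X\subseteq X$ makes $(\bar X,\Delta|_{\bar X\times\bar X})$ a generalized rock-paper-scissors matrix. A cycle is a finite sequence of profiles $(x_0,y_0),\dots,(x_n,y_n)$ in $X\times X$, not all equal, with $(x_0,y_0)=(x_n,y_n)$; it is an imitation cycle if for all consecutive profiles $(x_t,y_t),(x_{t+1},y_{t+1})$ on it, $\Delta(x_t,y_t)>0$ and $y_{t+1}=x_t$. *)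

theory Defs
  imports Complex_Main
begin

definition rel_payoff :: "('a \<Rightarrow> 'a \<Rightarrow> real) \<Rightarrow> 'a \<Rightarrow> 'a \<Rightarrow> real" where
  "rel_payoff \<pi> x y = \<pi> x y - \<pi> y x"

definition gen_rps_matrix :: "'a set \<Rightarrow> ('a \<Rightarrow> 'a \<Rightarrow> real) \<Rightarrow> bool" where
  "gen_rps_matrix Y \<Delta> \<longleftrightarrow> (\<forall>y\<in>Y. \<exists>x\<in>Y. \<Delta> x y > 0)"

definition gen_rps_game :: "'a set \<Rightarrow> ('a \<Rightarrow> 'a \<Rightarrow> real) \<Rightarrow> bool" where
  "gen_rps_game X \<Delta> \<longleftrightarrow> (\<exists>Xb. Xb \<noteq> {} \<and> Xb \<subseteq> X \<and> gen_rps_matrix Xb \<Delta>)"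

definition is_cycle :: "'a set \<Rightarrow> nat \<Rightarrow> (nat \<Rightarrow> 'a \<times> 'a) \<Rightarrow> bool" where
  "is_cycle X n p \<longleftrightarrow> (\<forall>t\<le>n. p t \<in> X \<times> X) \<and> p 0 = p n \<and> (\<exists>s\<le>n. \<exists>t\<le>n. p s \<noteq> p t)"

definition is_imitation_cycle ::
  "'a set \<Rightarrow> ('a \<Rightarrow> 'a \<Rightarrow> real) \<Rightarrow> nat \<Rightarrow> (nat \<Rightarrow> 'a \<times> 'a) \<Rightarrow> bool" where
  "is_imitation_cycle X \<Delta> n p \<longleftrightarrow> is_cycle X n p \<and>
     (\<forall>t<n. \<Delta> (fst (p t)) (snd (p t)) > 0 \<and> snd (p (Suc t)) = fst (p t))"

end

theory Submission
  imports Defs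
begin

text \<open>If every strategy in a nonempty finite set \<open>Y\<close> is beaten (in relative payoff) by some
  strategy of \<open>Y\<close>, iterating a choice \<open>f\<close> of such a beating reply must revisit a strategy;
  the orbit between the two visits, read as profiles \<open>(f y, y)\<close>, is an imitation cycle.
  Conversely, the opponents' strategies along an imitation cycle form a generalized
  rock-paper-scissors matrix, since each of them is beaten by the next one.\<close>

lemma rel_payoff_self [simp]: "rel_payoff \<pi> x x = 0"
  by (simp add: rel_payoff_def)

lemma funpow_repeats:
  assumes "finite A" "f ` A \<subseteq> A" "x \<in> A"
  obtains i j where "i < j" "(f ^^ i) x = (f ^^ j) x"
proof -
  have "(f ^^ k) x \<in> A" for k
    using assms(2,3) by (induction k) auto
  then have "finite (range (\<lambda>k. (f ^^ k) x))"
    using assms(1) by (meson finite_subset image_subset_iff)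
  then have "\<not> inj (\<lambda>k. (f ^^ k) x)"
    using finite_imageD by blast
  then obtain a b where "a \<noteq> b" "(f ^^ a) x = (f ^^ b) x"
    unfolding inj_def by blast
  then show thesis
    using that by (metis linorder_neqE_nat)
qed

lemma is_imitation_cycle_mono:
  "is_imitation_cycle Y \<Delta> n p \<Longrightarrow> Y \<subseteq> X \<Longrightarrow> is_imitation_cycle X \<Delta> n p"
  unfolding is_imitation_cycle_def is_cycle_def by (meson Sigma_mono subsetD)

lemma gen_rps_matrix_imp_imitation_cycle:
  assumes "finite Y" "Y \<noteq> {}" "gen_rps_matrix Y \<Delta>"
    and irrefl: "\<And>x. \<not> \<Delta> x x > 0"
  shows "\<exists>n p. is_imitation_cycle Y \<Delta> n p"
proof -
  obtain f where f: "\<And>y. y \<in> Y \<Longrightarrow> f y \<in> Y \<and> \<Delta> (f y) y > 0"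
    using assms(3) unfolding gen_rps_matrix_def by metis
  obtain y0 where "y0 \<in> Y"
    using assms(2) by blast
  define y where "y k = (f ^^ k) y0" for k
  have y_in: "y k \<in> Y" for k
    unfolding y_def using \<open>y0 \<in> Y\<close> f by (induction k) auto
  have y_beaten: "\<Delta> (y (Suc k)) (y k) > 0" for k
    using f y_in by (simp add: y_def)
  have "f ` Y \<subseteq> Y"
    using f by blast
  then obtain i j where "i < j" "y i = y j"
    using funpow_repeats[OF assms(1) _ \<open>y0 \<in> Y\<close>] unfolding y_def by blast
  then have periodic: "y (i + k) = y (j + k)" for k
    by (induction k) (simp_all add: y_def)
  define p where "p t = (y (i + t + 1), y (i + t))" for t
  have "is_imitation_cycle Y \<Delta> (j - i) p"
    unfolding is_imitation_cycle_def is_cycle_def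
  proof (intro conjI allI impI)
    show "p t \<in> Y \<times> Y" for t
      using y_in by (simp add: p_def)
    show "p 0 = p (j - i)"
      using periodic[of 0] periodic[of 1] \<open>i < j\<close> by (simp add: p_def)
    have "p 0 \<noteq> p 1"
      using y_beaten[of i] irrefl by (auto simp: p_def)
    moreover have "1 \<le> j - i"
      using \<open>i < j\<close> by simp
    ultimately show "\<exists>s\<le>j - i. \<exists>t\<le>j - i. p s \<noteq> p t"
      by (intro exI[of _ 0] exI[of _ 1]) auto
    show "\<Delta> (fst (p t)) (snd (p t)) > 0" for t
      using y_beaten[of "i + t"] by (simp add: p_def)
    show "snd (p (Suc t)) = fst (p t)" for t
      by (simp add: p_def)
  qed
  then show ?thesis by blast
qed

lemma imitation_cycle_imp_gen_rps_game:
  assumes "is_imitation_cycle X \<Delta> n p"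
  shows "gen_rps_game X \<Delta>"
proof -
  have in_X: "\<And>t. t \<le> n \<Longrightarrow> p t \<in> X \<times> X" and closed: "p 0 = p n"
    and nonconst: "\<exists>s\<le>n. \<exists>t\<le>n. p s \<noteq> p t"
    and step: "\<And>t. t < n \<Longrightarrow> \<Delta> (fst (p t)) (snd (p t)) > 0 \<and> snd (p (Suc t)) = fst (p t)"
    using assms unfolding is_imitation_cycle_def is_cycle_def by auto
  have "n > 0"
    using nonconst by (metis le_zero_eq neq0_conv)
  define Y where "Y = (\<lambda>t. snd (p t)) ` {..n}"
  have "gen_rps_matrix Y \<Delta>"
    unfolding gen_rps_matrix_def
  proof
    fix z assume "z \<in> Y"
    text \<open>Since \<open>p n = p 0\<close>, every opponent strategy on the cycle occurs at a time \<open>s < n\<close>.\<close>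
    then obtain t where "t \<le> n" "z = snd (p t)"
      unfolding Y_def by blast
    then obtain s where s: "s < n" "z = snd (p s)"
      using closed \<open>n > 0\<close> by (metis le_neq_implies_less)
    have "snd (p (Suc s)) \<in> Y"
      unfolding Y_def using s(1) by (intro imageI) simp
    moreover have "\<Delta> (snd (p (Suc s))) z > 0"
      using step[OF s(1)] s(2) by simp
    ultimately show "\<exists>x\<in>Y. \<Delta> x z > 0" by blast
  qed
  moreover have "Y \<noteq> {}" "Y \<subseteq> X"
    unfolding Y_def using in_X by (auto simp: mem_Times_iff)
  ultimately show ?thesis
    unfolding gen_rps_game_def by blast
qed

theorem lemma3:
  fixes X :: "'a set" and \<pi> :: "'a \<Rightarrow> 'a \<Rightarrow> real"
  assumes "finite X"
  shows "gen_rps_game X (rel_payoff \<pi>) \<longleftrightarrow>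
         (\<exists>n p. is_imitation_cycle X (rel_payoff \<pi>) n p)"
proof
  assume "gen_rps_game X (rel_payoff \<pi>)"
  then obtain Y where "Y \<noteq> {}" "Y \<subseteq> X" "gen_rps_matrix Y (rel_payoff \<pi>)"
    unfolding gen_rps_game_def by blast
  moreover have "finite Y"
    using \<open>Y \<subseteq> X\<close> assms finite_subset by blast
  ultimately obtain n p where "is_imitation_cycle Y (rel_payoff \<pi>) n p"
    using gen_rps_matrix_imp_imitation_cycle[of Y "rel_payoff \<pi>"] by fastforce
  then show "\<exists>n p. is_imitation_cycle X (rel_payoff \<pi>) n p"
    using is_imitation_cycle_mono \<open>Y \<subseteq> X\<close> by blast
next
  assume "\<exists>n p. is_imitation_cycle X (rel_payoff \<pi>) n p"
  then show "gen_rps_game X (rel_payoff \<pi>)"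
    using imitation_cycle_imp_gen_rps_game by blast
qed

end
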